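(* Consider the input-output system $\dot{\mathbf x}=\mathbf f(\mathbf x)+\hat{\mathbf e}_1 g(u,x_1)$, $u\in J$, satisfying assumption (A0), with output $x_1$, and let $G$ be its J-graph. If $G$ has no positive feedback loop that is disjoint from the node $x_1$, then the system is not quasi-adaptive and does not exhibit biphasic response.
   Context: $\mathcal X\subset\mathbb R^n$, $J\subset\mathbb R$ an interval, $\mathbf f:\mathcal X\to\mathbb R^n$ is $C^1$, every entry $\partial f_i/\partial x_k$ has constant sign (positive, negative, or identically zero) on $\mathcal X$, and $\partial f_i/\partial x_i<0$. $\hat{\mathbf e}_1$ is the first standard basis vector. The control term $g$ is one of: flow, $g(u,x_1)=u$; activation, $g(u,x_1)=(u+k_{\mathrm{on}})(x_T-x_1)-k_{\mathrm{off}}x_1$; inhibition, $g(u,x_1)=k_{\mathrm{on}}(x_T-x_1)-(u+k_{\mathrm{off}})x_1$, with constants $x_T,k_{\mathrm{on}},k_{\mathrm{off}}>0$; in the activation and inhibition cases the state space satisfies $0\le x_1\le x_T$ and every steady state has $0<x_1<x_T$. Write $\mathbf F(\mathbf x,u)=\mathbf f(\mathbf x)+\hat{\mathbf e}_1g(u,x_1)$. Assumption (A0): for every $u_0\in J$ there is $\mathbf x_0\in\mathcal X$ with $\mathbf F(\mathbf x_0,u_0)=\mathbf 0$ and $\frac{\partial\mathbf F}{\partial\mathbf x}(\mathbf x_0,u_0)$ of full rank; by the implicit function theorem this gives continuously differentiable steady-state curves $\mathbf x^*(u)$. With output $x_j$, the system is quasi-adaptive if, along such a curve, $\partial_u x_j^*(u_0)=0$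 for some $u_0\in J$, and exhibits biphasic response if $\partial_u x_j^*(u_1)\,\partial_u x_j^*(u_2)<0$ for some $u_1,u_2\in J$. The J-graph of $\frac{\partial\mathbf f}{\partial\mathbf x}$ is the signed directed graph on nodes $x_1,\ldots,x_n$ with a positive (resp. negative) edge from $x_i$ to $x_k$ iff $\partial f_k/\partial x_i>0$ (resp. $<0$); every node has a negative self-loop. The J-graph $G$ of the input-output system is this graph together with an input edge into $x_1$ (from an external source for flow, or from an extra node $C$ representing the control, positive for activation, negative for inhibition) and an outgoing output edge from the output node. A path is a walk without repeated vertices except possibly first = last, in which case it is a cycle; its sign is the product of its edge signs. A feedback loop is a cycle of length at least two; it is positive if its sign is positive. *)

theory Defs
  imports "HOL-Analysis.Analysis"
begin

datatype control = Flow | Activation real real real | Inhibition real real real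

fun gfun :: "control \<Rightarrow> real \<Rightarrow> real \<Rightarrow> real" where
  "gfun Flow u x1 = u"
| "gfun (Activation xT kon koff) u x1 = (u + kon) * (xT - x1) - koff * x1"
| "gfun (Inhibition xT kon koff) u x1 = kon * (xT - x1) - (u + koff) * x1"

definition admissible_control ::
  "control \<Rightarrow> 'n \<Rightarrow> (real^'n \<Rightarrow> real^'n) \<Rightarrow> (real^'n) set \<Rightarrow> real set \<Rightarrow> bool" where
  "admissible_control c one f X J \<longleftrightarrow>
     (\<forall>xT kon koff. (c = Activation xT kon koff \<or> c = Inhibition xT kon koff) \<longrightarrow>
        xT > 0 \<and> kon > 0 \<and> koff > 0 \<and>
        (\<forall>x\<in>X. 0 \<le> x $ one \<and> x $ one \<le> xT) \<and>
        (\<forall>x\<in>X. \<forall>u\<in>J. f x + axis one (gfun c u (x $ one)) = 0 \<longrightarrow>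
              0 < x $ one \<and> x $ one < xT))"

text \<open>The vector field F(x,u) = f(x) + e_1 g(u,x_1); the node "one" plays the role of x_1.\<close>
definition sysF :: "(real^'n \<Rightarrow> real^'n) \<Rightarrow> control \<Rightarrow> 'n \<Rightarrow> real^'n \<Rightarrow> real \<Rightarrow> real^'n" where
  "sysF f c one x u = f x + axis one (gfun c u (x $ one))"

definition jac_full_rank :: "(real^'n \<Rightarrow> real^'n) \<Rightarrow> control \<Rightarrow> 'n \<Rightarrow> real^'n \<Rightarrow> real \<Rightarrow> bool" where
  "jac_full_rank f c one x u \<longleftrightarrow>
     (\<exists>A :: real^'n^'n. ((\<lambda>y. sysF f c one y u) has_derivative (\<lambda>h. A *v h)) (at x)
                        \<and> rank A = CARD('n))"

definition A0 :: "(real^'n \<Rightarrow> real^'n) \<Rightarrow> control \<Rightarrow> 'n \<Rightarrow> (real^'n) set \<Rightarrow> real set \<Rightarrow> bool" where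
  "A0 f c one X J \<longleftrightarrow>
     (\<forall>u0\<in>J. \<exists>x0\<in>X. sysF f c one x0 u0 = 0 \<and> jac_full_rank f c one x0 u0)"

definition steady_curve ::
  "(real^'n \<Rightarrow> real^'n) \<Rightarrow> control \<Rightarrow> 'n \<Rightarrow> (real^'n) set \<Rightarrow> real set \<Rightarrow>
   real set \<Rightarrow> (real \<Rightarrow> real^'n) \<Rightarrow> (real \<Rightarrow> real^'n) \<Rightarrow> bool" where
  "steady_curve f c one X J I xs xs' \<longleftrightarrow>
     is_interval I \<and> I \<subseteq> J \<and> (\<exists>a\<in>I. \<exists>b\<in>I. a < b) \<and>
     (\<forall>u\<in>I. xs u \<in> X \<and> sysF f c one (xs u) u = 0 \<and> jac_full_rank f c one (xs u) u \<and>
             (xs has_vector_derivative xs' u) (at u within I)) \<and>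
     continuous_on I xs'"

definition quasi_adaptive ::
  "(real^'n \<Rightarrow> real^'n) \<Rightarrow> control \<Rightarrow> 'n \<Rightarrow> (real^'n) set \<Rightarrow> real set \<Rightarrow> 'n \<Rightarrow> bool" where
  "quasi_adaptive f c one X J j \<longleftrightarrow>
     (\<exists>I xs xs'. steady_curve f c one X J I xs xs' \<and> (\<exists>u0\<in>I. xs' u0 $ j = 0))"

definition biphasic ::
  "(real^'n \<Rightarrow> real^'n) \<Rightarrow> control \<Rightarrow> 'n \<Rightarrow> (real^'n) set \<Rightarrow> real set \<Rightarrow> 'n \<Rightarrow> bool" where
  "biphasic f c one X J j \<longleftrightarrow>
     (\<exists>I xs xs'. steady_curve f c one X J I xs xs' \<and>
        (\<exists>u1\<in>I. \<exists>u2\<in>I. xs' u1 $ j * xs' u2 $ j < 0))"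

text \<open>Sign of the edge from node i to node k in the J-graph of the Jacobian Df
  (Df x $ k $ i = partial f_k / partial x_i, constant sign on X).\<close>
definition jsign :: "(real^'n \<Rightarrow> real^'n^'n) \<Rightarrow> (real^'n) set \<Rightarrow> 'n \<Rightarrow> 'n \<Rightarrow> int" where
  "jsign Df X i k =
     (if \<forall>x\<in>X. Df x $ k $ i > 0 then 1
      else if \<forall>x\<in>X. Df x $ k $ i < 0 then -1 else 0)"

definition positive_feedback_loop :: "(real^'n \<Rightarrow> real^'n^'n) \<Rightarrow> (real^'n) set \<Rightarrow> 'n list \<Rightarrow> bool" where
  "positive_feedback_loop Df X vs \<longleftrightarrow>
     distinct vs \<and> length vs \<ge> 2 \<and>
     (\<forall>j<length vs. jsign Df X (vs ! j) (vs ! ((j + 1) mod length vs)) \<noteq> 0) \<and>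
     (\<Prod>j<length vs. jsign Df X (vs ! j) (vs ! ((j + 1) mod length vs))) = 1"

end

theory Submission
  imports Defs "HOL-Combinatorics.Cycles"
begin

(* Differentiating the steady-state equation f (x*(u)) + e_1 g (u, x*_1(u)) = 0 gives
   Df v + (g_u + g_x1 v_1) e_1 = 0 for v = x*'(u).  If v_1 = 0, then the rows of Df v other than
   x_1 vanish, and the principal submatrix of Df off x_1 is nonsingular: its cycles avoid x_1 and
   are therefore negative, so every nonzero term of its Leibniz expansion has the sign of the
   diagonal term.  Hence v = 0 and g_u = 0, which is impossible at a steady state (g_u is 1,
   x_T - x_1 or -x_1).  Thus the continuous function v_1 never vanishes along a steady-state curve,
   so it has constant sign. *)

lemma sign_cycle_of_list:
  "distinct cs \<Longrightarrow> sign (cycle_of_list cs) = (-1) ^ (length cs - 1)"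
proof (induction cs rule: cycle_of_list.induct)
  case (1 i j cs)
  have "sign (cycle_of_list (i # j # cs)) = sign (Transposition.transpose i j) * sign (cycle_of_list (j # cs))"
    by (simp add: sign_compose permutation_swap_id permutation_of_cycle)
  also have "\<dots> = - ((-1) ^ length cs)"
    using 1 by (simp add: sign_swap_id)
  finally show ?case
    by (simp del: cycle_of_list.simps)
qed auto

lemma permutes_eq_cycle_of_support_comp:
  assumes "p permutes S" "finite S"
  shows "p = cycle_of_list (support p a) \<circ> (\<lambda>y. if y \<in> S - set (support p a) then p y else y)"
    (is "p = _ \<circ> ?q")
proof
  fix y
  have perm: "permutation p"
    using assms permutation_permutes by blast
  consider "y \<in> set (support p a)" | "y \<in> S - set (support p a)" | "y \<notin> S" "y \<notin> set (support p a)"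
    by blast
  then show "p y = (cycle_of_list (support p a) \<circ> ?q) y"
  proof cases
    case 1
    then show ?thesis by (simp add: cycle_restrict[OF perm])
  next
    case 2
    then have "?q y \<in> S - set (support p a)"
      using permutes_in_image[OF semidecomposition[OF assms]] by blast
    then show ?thesis using 2 by (simp add: id_outside_supp)
  next
    case 3
    then show ?thesis by (simp add: id_outside_supp permutes_not_in[OF assms(1)])
  qed
qed

lemma set_support_subset:
  assumes "p permutes S" "a \<in> S"
  shows "set (support p a) \<subseteq> S"
proof -
  have "(p ^^ n) a \<in> S" for n
    using permutes_in_image[OF permutes_funpow[OF assms(1)]] assms(2) by blast
  then show ?thesis
    by auto
qed

lemma sign_permutes_split_support:
  assumes "p permutes S" "finite S"
  shows "sign p = (-1) ^ (length (support p a) - 1) * sign (\<lambda>y. if y \<in> S - set (support p a) then p y else y)"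
    (is "_ = _ * sign ?q")
proof -
  have "permutation ?q"
    using semidecomposition[OF assms] assms(2) permutation_permutes by blast
  have "permutation p"
    using assms permutation_permutes by blast
  have "sign p = sign (cycle_of_list (support p a) \<circ> ?q)"
    using permutes_eq_cycle_of_support_comp[OF assms, of a] by (rule arg_cong)
  also have "\<dots> = sign (cycle_of_list (support p a)) * sign ?q"
    by (rule sign_compose[OF permutation_of_cycle \<open>permutation ?q\<close>])
  also have "sign (cycle_of_list (support p a)) = (-1) ^ (length (support p a) - 1)"
    by (rule sign_cycle_of_list[OF cycle_of_permutation[OF \<open>permutation p\<close>]])
  finally show ?thesis .
qed

(* The J-graph of a Jacobian D gives the edge i \<rightarrow> k the weight D $ k $ i, so its cycles are
   weighted by cycle_weight (\<lambda>i k. D $ k $ i). *)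
definition cycle_weight :: "('a \<Rightarrow> 'a \<Rightarrow> 'b::comm_monoid_mult) \<Rightarrow> 'a list \<Rightarrow> 'b" where
  "cycle_weight w vs = (\<Prod>j<length vs. w (vs ! j) (vs ! ((j + 1) mod length vs)))"

lemma prod_support_eq_cycle_weight:
  assumes "permutation p"
  shows "(\<Prod>i\<in>set (support p a). w i (p i)) = cycle_weight w (support p a)"
proof -
  define k where "k = least_power p a"
  have pk: "(p ^^ k) a = a"
    unfolding k_def by (rule least_power_of_permutation(1)[OF assms])
  have "inj_on (\<lambda>j. (p ^^ j) a) {..<k}"
    using cycle_of_permutation[OF assms, of a] by (simp add: k_def distinct_map atLeast0LessThan)
  then have "(\<Prod>i\<in>set (support p a). w i (p i)) = (\<Prod>j<k. w ((p ^^ j) a) (p ((p ^^ j) a)))"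
    by (simp add: k_def atLeast0LessThan prod.reindex)
  also have "\<dots> = (\<Prod>j<k. w ((p ^^ j) a) ((p ^^ ((j + 1) mod k)) a))"
    by (intro prod.cong refl) (simp add: funpow_mod_eq[OF pk])
  also have "\<dots> = cycle_weight w (support p a)"
    using least_power_of_permutation(2)[OF assms, of a]
    by (simp add: cycle_weight_def k_def)
  finally show ?thesis .
qed

lemma prod_permutes_split_support:
  assumes "p permutes S" "finite S" "a \<in> S"
  shows "(\<Prod>i\<in>S. w i (p i)) = cycle_weight w (support p a) * (\<Prod>i\<in>S - set (support p a). w i (p i))"
proof -
  have "permutation p"
    using assms(1,2) permutation_permutes by blast
  have "(\<Prod>i\<in>S. w i (p i)) = (\<Prod>i\<in>S - set (support p a). w i (p i)) * (\<Prod>i\<in>set (support p a). w i (p i))"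
    by (rule prod.subset_diff[OF set_support_subset[OF assms(1,3)] assms(2)])
  then show ?thesis
    unfolding prod_support_eq_cycle_weight[OF \<open>permutation p\<close>] by (simp only: mult.commute)
qed

lemma cycle_weight_cong:
  assumes "\<And>i k. i \<in> set vs \<Longrightarrow> k \<in> set vs \<Longrightarrow> w i k = w' i k"
  shows "cycle_weight w vs = cycle_weight w' vs"
  unfolding cycle_weight_def by (intro prod.cong refl assms nth_mem) (auto intro!: mod_less_divisor)

lemma cycle_weight_eq_0_if_no_out_edge:
  fixes w :: "'a \<Rightarrow> 'a \<Rightarrow> 'b::comm_semiring_1"
  assumes "distinct vs" "length vs \<ge> 2" "a \<in> set vs" "\<And>k. k \<noteq> a \<Longrightarrow> w a k = 0"
  shows "cycle_weight w vs = 0"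
proof -
  obtain m where m: "m < length vs" "vs ! m = a"
    using assms(3) by (auto simp: in_set_conv_nth)
  have "(m + 1) mod length vs \<noteq> m"
    using m(1) assms(2) by (cases "m + 1 < length vs") (auto simp: mod_if)
  moreover have "(m + 1) mod length vs < length vs"
    using m(1) by (auto intro!: mod_less_divisor)
  ultimately have "vs ! ((m + 1) mod length vs) \<noteq> a"
    using m assms(1) by (metis nth_eq_iff_index_eq)
  then have "w (vs ! m) (vs ! ((m + 1) mod length vs)) = 0"
    using m(2) assms(4) by simp
  then show ?thesis
    unfolding cycle_weight_def using m(1) by (intro prod_zero) auto
qed

lemma sign_mult_prod_pos_if_signed_cycles:
  fixes w :: "'a \<Rightarrow> 'a \<Rightarrow> real"
  assumes "finite S" "p permutes S"
    and "\<And>vs. distinct vs \<Longrightarrow> set vs \<subseteq> S \<Longrightarrow> vs \<noteq> [] \<Longrightarrow> cycle_weight w vs \<noteq> 0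
               \<Longrightarrow> (-1) ^ (length vs - 1) * cycle_weight w vs > 0"
    and "(\<Prod>i\<in>S. w i (p i)) \<noteq> 0"
  shows "of_int (sign p) * (\<Prod>i\<in>S. w i (p i)) > 0"
  using assms
proof (induction "card S" arbitrary: S p rule: less_induct)
  case less
  show ?case
  proof (cases "S = {}")
    case True
    then show ?thesis using less.prems(2) by simp
  next
    case False
    then obtain s where "s \<in> S" by blast
    define vs where "vs = support p s"
    define q where "q = (\<lambda>y. if y \<in> S - set vs then p y else y)"
    have "permutation p"
      using less.prems(1,2) permutation_permutes by blast
    then have "vs \<noteq> []" "hd vs = s" "distinct vs"
      using least_power_of_permutation(2)[of p s] cycle_of_permutation[of p s]
      by (simp_all add: vs_def hd_map)
    then have "s \<in> set vs"
      by (metis hd_in_set)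
    have q: "q permutes S - set vs"
      unfolding q_def vs_def using semidecomposition[OF less.prems(2,1)] .
    have sign_p: "sign p = (-1) ^ (length vs - 1) * sign q"
      unfolding q_def vs_def by (rule sign_permutes_split_support[OF less.prems(2,1)])
    have "(\<Prod>i\<in>S - set vs. w i (q i)) = (\<Prod>i\<in>S - set vs. w i (p i))"
      by (intro prod.cong) (auto simp: q_def)
    then have prod_p: "(\<Prod>i\<in>S. w i (p i)) = cycle_weight w vs * (\<Prod>i\<in>S - set vs. w i (q i))"
      using prod_permutes_split_support[OF less.prems(2,1) \<open>s \<in> S\<close>, of w, folded vs_def] by simp
    have cycle_pos: "(-1) ^ (length vs - 1) * cycle_weight w vs > 0"
      using less.prems(3)[OF \<open>distinct vs\<close> _ \<open>vs \<noteq> []\<close>] less.prems(4)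
        set_support_subset[OF less.prems(2) \<open>s \<in> S\<close>, folded vs_def]
      by (simp add: prod_p)
    have "card (S - set vs) < card S"
      using \<open>s \<in> set vs\<close> \<open>s \<in> S\<close> by (intro psubset_card_mono less.prems(1)) auto
    then have rest_pos: "of_int (sign q) * (\<Prod>i\<in>S - set vs. w i (q i)) > 0"
      using less.prems(1,3,4) by (intro less.hyps[OF _ _ q]) (auto simp: prod_p)
    have "of_int (sign p) * (\<Prod>i\<in>S. w i (p i))
          = ((-1) ^ (length vs - 1) * cycle_weight w vs) * (of_int (sign q) * (\<Prod>i\<in>S - set vs. w i (q i)))"
      by (simp add: sign_p prod_p)
    then show ?thesis
      using cycle_pos rest_pos by simp
  qed
qed

lemma det_pos_if_signed_cycles:
  fixes W :: "real^'n^'n"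
  assumes diag: "\<And>i. W $ i $ i > 0"
    and cycles: "\<And>vs. distinct vs \<Longrightarrow> length vs \<ge> 2 \<Longrightarrow> cycle_weight (\<lambda>i k. W $ i $ k) vs \<noteq> 0
                   \<Longrightarrow> (-1) ^ (length vs - 1) * cycle_weight (\<lambda>i k. W $ i $ k) vs > 0"
  shows "det W > 0"
proof -
  define T where "T p = of_int (sign p) * (\<Prod>i\<in>UNIV. W $ i $ p i)" for p
  have signed: "(-1) ^ (length vs - 1) * cycle_weight (\<lambda>i k. W $ i $ k) vs > 0"
    if "distinct vs" "vs \<noteq> []" "cycle_weight (\<lambda>i k. W $ i $ k) vs \<noteq> 0" for vs
  proof (cases "length vs = 1")
    case True
    then obtain i where "vs = [i]"
      by (auto simp: length_Suc_conv)
    then show ?thesis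
      using diag[of i] by (simp add: cycle_weight_def)
  next
    case False
    then have "length vs \<ge> 2"
      using \<open>vs \<noteq> []\<close> by (cases vs) (auto simp: Suc_le_eq)
    then show ?thesis
      using cycles that(1,3) by blast
  qed
  have "T p \<ge> 0" if "p permutes UNIV" for p
  proof (cases "(\<Prod>i\<in>UNIV. W $ i $ p i) = 0")
    case True
    show ?thesis
      unfolding T_def True by simp
  next
    case False
    have "T p > 0"
      unfolding T_def using False signed
      by (intro sign_mult_prod_pos_if_signed_cycles[where w = "\<lambda>i k. W $ i $ k", OF finite_class.finite_UNIV that])
        auto
    then show ?thesis
      by simp
  qed
  moreover have "T id > 0"
    using diag by (simp add: T_def prod_pos)
  ultimately show ?thesis
    unfolding det_def T_def[symmetric]
    by (intro sum_pos2[of _ id]) (auto simp: finite_permutations)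
qed

lemma det_uminus: "det (- A) = (-1) ^ CARD('n) * det (A :: 'a::comm_ring_1^'n^'n)"
  unfolding det_def by (simp add: prod_uminus sum_distrib_left mult.left_commute)

lemma det_nonzero_if_negative_cycles:
  fixes M :: "real^'n^'n"
  assumes diag: "\<And>i. M $ i $ i < 0"
    and cycles: "\<And>vs. distinct vs \<Longrightarrow> length vs \<ge> 2 \<Longrightarrow> cycle_weight (\<lambda>i k. M $ k $ i) vs \<noteq> 0
                   \<Longrightarrow> cycle_weight (\<lambda>i k. M $ k $ i) vs < 0"
  shows "det M \<noteq> 0"
proof -
  have neg_power: "(-1::real) ^ (n - 1) * (-1) ^ n = -1" if "n \<ge> 1" for n
    using that by (cases n) simp_all
  have "cycle_weight (\<lambda>i k. (- transpose M) $ i $ k) vs = (-1) ^ length vs * cycle_weight (\<lambda>i k. M $ k $ i) vs"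
    for vs
    by (simp add: cycle_weight_def transpose_def prod_uminus)
  then have "det (- transpose M) > 0"
    using diag cycles neg_power by (intro det_pos_if_signed_cycles) (auto simp: transpose_def mult.assoc[symmetric])
  then have "(-1) ^ CARD('n) * det M > 0"
    by (simp add: det_uminus)
  then show ?thesis
    by auto
qed

lemma eq_0_if_mult_vanishes_off_node:
  fixes D :: "real^'n^'n" and v :: "real^'n"
  assumes diag: "\<And>i. D $ i $ i < 0"
    and cycles: "\<And>vs. distinct vs \<Longrightarrow> length vs \<ge> 2 \<Longrightarrow> a \<notin> set vs
                   \<Longrightarrow> cycle_weight (\<lambda>i k. D $ k $ i) vs \<noteq> 0 \<Longrightarrow> cycle_weight (\<lambda>i k. D $ k $ i) vs < 0"
    and rows: "\<And>i. i \<noteq> a \<Longrightarrow> (D *v v) $ i = 0"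
    and va: "v $ a = 0"
  shows "v = 0"
proof -
  \<comment> \<open>N decouples node a: det N is minus the principal minor of D off a, and no cycle
    through a has nonzero weight in N.\<close>
  define N :: "real^'n^'n"
    where "N = (\<chi> i k. if i = a \<or> k = a then (if i = k then -1 else 0) else D $ i $ k)"
  have "N $ i $ k * v $ k = (if i = a then 0 else D $ i $ k * v $ k)" for i k
    using va by (simp add: N_def)
  then have "(N *v v) $ i = 0" for i
    using rows[of i] by (cases "i = a") (simp_all add: matrix_vector_mult_def)
  then have "N *v v = 0"
    by (simp add: vec_eq_iff)
  moreover have "det N \<noteq> 0"
  proof (rule det_nonzero_if_negative_cycles)
    show "N $ i $ i < 0" for i
      using diag by (simp add: N_def)
    fix vs :: "'n list"
    assume vs: "distinct vs" "length vs \<ge> 2" and nonzero: "cycle_weight (\<lambda>i k. N $ k $ i) vs \<noteq> 0"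
    have "a \<notin> set vs"
      using cycle_weight_eq_0_if_no_out_edge[OF vs, of a "\<lambda>i k. N $ k $ i"] nonzero by (auto simp: N_def)
    then have "cycle_weight (\<lambda>i k. N $ k $ i) vs = cycle_weight (\<lambda>i k. D $ k $ i) vs"
      by (intro cycle_weight_cong) (auto simp: N_def)
    then show "cycle_weight (\<lambda>i k. N $ k $ i) vs < 0"
      using cycles[OF vs \<open>a \<notin> set vs\<close>] nonzero by simp
  qed
  ultimately show ?thesis
    by (metis invertible_det_nz invertible_left_inverse matrix_left_invertible_ker)
qed

lemma sgn_prod: "sgn (prod f A) = (\<Prod>x\<in>A. sgn (f x :: 'a::linordered_idom))"
  by (induction A rule: infinite_finite_induct) (simp_all add: sgn_mult)

lemma jsign_eq_sgn:
  assumes "(\<forall>x\<in>X. Df x $ k $ i > 0) \<or> (\<forall>x\<in>X. Df x $ k $ i < 0) \<or> (\<forall>x\<in>X. Df x $ k $ i = 0)"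
    and "x \<in> X"
  shows "real_of_int (jsign Df X i k) = sgn (Df x $ k $ i)"
  using assms by (auto simp: jsign_def)

lemma cycle_weight_neg_if_not_positive_feedback_loop:
  fixes Df :: "real^'n \<Rightarrow> real^'n^'n"
  assumes const_sign: "\<forall>i k. (\<forall>x\<in>X. Df x $ i $ k > 0) \<or> (\<forall>x\<in>X. Df x $ i $ k < 0)
                          \<or> (\<forall>x\<in>X. Df x $ i $ k = 0)"
    and "x \<in> X" "\<not> positive_feedback_loop Df X vs" "distinct vs" "length vs \<ge> 2"
    and nonzero: "cycle_weight (\<lambda>i k. Df x $ k $ i) vs \<noteq> 0"
  shows "cycle_weight (\<lambda>i k. Df x $ k $ i) vs < 0"
proof -
  define e where "e j = jsign Df X (vs ! j) (vs ! ((j + 1) mod length vs))" for j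
  have sgn_weight: "sgn (cycle_weight (\<lambda>i k. Df x $ k $ i) vs) = of_int (\<Prod>j<length vs. e j)"
    using const_sign \<open>x \<in> X\<close> by (simp add: cycle_weight_def sgn_prod e_def jsign_eq_sgn)
  then have "(\<Prod>j<length vs. e j) \<noteq> 0"
    using nonzero by (metis of_int_0 sgn_0_0)
  then have "\<forall>j<length vs. e j \<noteq> 0"
    by simp
  then have "(\<Prod>j<length vs. e j) \<noteq> 1"
    using assms(3-5) by (simp add: positive_feedback_loop_def e_def)
  then have "\<not> cycle_weight (\<lambda>i k. Df x $ k $ i) vs > 0"
    using sgn_weight by (metis of_int_eq_1_iff sgn_pos)
  then show ?thesis
    using nonzero by simp
qed

fun dgfun_du :: "control \<Rightarrow> real \<Rightarrow> real" where
  "dgfun_du Flow x1 = 1"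
| "dgfun_du (Activation xT kon koff) x1 = xT - x1"
| "dgfun_du (Inhibition xT kon koff) x1 = - x1"

fun dgfun_dx1 :: "control \<Rightarrow> real \<Rightarrow> real" where
  "dgfun_dx1 Flow u = 0"
| "dgfun_dx1 (Activation xT kon koff) u = - (u + kon) - koff"
| "dgfun_dx1 (Inhibition xT kon koff) u = - kon - (u + koff)"

lemma has_real_derivative_gfun:
  assumes "(y has_real_derivative y') (at u within I)"
  shows "((\<lambda>u. gfun c u (y u)) has_real_derivative dgfun_du c (y u) + dgfun_dx1 c u * y') (at u within I)"
  by (cases c) (auto intro!: derivative_eq_intros assms simp: algebra_simps)

lemma dgfun_du_nonzero_at_steady_state:
  assumes "admissible_control c one f X J" "x \<in> X" "u \<in> J" "sysF f c one x u = 0"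
  shows "dgfun_du c (x $ one) \<noteq> 0"
  using assms by (cases c) (fastforce simp: admissible_control_def sysF_def)+

lemma bounded_linear_axis: "bounded_linear (axis i :: 'a::euclidean_space \<Rightarrow> 'a^'n)"
  unfolding linear_conv_bounded_linear[symmetric]
  by (rule linearI) (simp_all add: axis_def vec_eq_iff)

lemma steady_curve_linearization:
  assumes curve: "steady_curve f c one X J I xs xs'" and "u \<in> I"
    and f_deriv: "(f has_derivative (\<lambda>h. A *v h)) (at (xs u))"
  shows "A *v xs' u + axis one (dgfun_du c (xs u $ one) + dgfun_dx1 c u * xs' u $ one) = 0"
proof -
  have xs_deriv: "(xs has_vector_derivative xs' u) (at u within I)"
    and steady: "\<And>u. u \<in> I \<Longrightarrow> sysF f c one (xs u) u = 0"
    using curve \<open>u \<in> I\<close> by (auto simp: steady_curve_def)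
  have "((\<lambda>u. f (xs u)) has_vector_derivative A *v xs' u) (at u within I)"
    using has_derivative_compose[OF xs_deriv[unfolded has_vector_derivative_def] f_deriv]
    by (simp add: has_vector_derivative_def matrix_vector_mult_scaleR)
  moreover have "((\<lambda>u. xs u $ one) has_real_derivative xs' u $ one) (at u within I)"
    using bounded_linear.has_vector_derivative[OF bounded_linear_vec_nth xs_deriv]
    by (simp add: has_real_derivative_iff_has_vector_derivative)
  then have "((\<lambda>u. gfun c u (xs u $ one)) has_real_derivative
               dgfun_du c (xs u $ one) + dgfun_dx1 c u * xs' u $ one) (at u within I)"
    by (rule has_real_derivative_gfun)
  then have "((\<lambda>u. axis one (gfun c u (xs u $ one))) has_vector_derivative
               axis one (dgfun_du c (xs u $ one) + dgfun_dx1 c u * xs' u $ one)) (at u within I)"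
    by (intro bounded_linear.has_vector_derivative[OF bounded_linear_axis])
      (simp add: has_real_derivative_iff_has_vector_derivative)
  ultimately have "((\<lambda>u. sysF f c one (xs u) u) has_vector_derivative
      A *v xs' u + axis one (dgfun_du c (xs u $ one) + dgfun_dx1 c u * xs' u $ one)) (at u within I)"
    unfolding sysF_def by (rule has_vector_derivative_add)
  moreover have "((\<lambda>u. sysF f c one (xs u) u) has_vector_derivative 0) (at u within I)"
    using steady \<open>u \<in> I\<close> by (intro has_vector_derivative_transform[OF \<open>u \<in> I\<close> _ has_vector_derivative_const]) auto
  moreover have "at u within I \<noteq> bot"
  proof -
    have "connected I" "\<And>y. I \<noteq> {y}"
      using curve by (auto simp: steady_curve_def is_interval_connected)
    then show ?thesis
      using connected_imp_perfect[OF _ \<open>u \<in> I\<close>] by (simp add: trivial_limit_within)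
  qed
  ultimately show ?thesis
    using vector_derivative_unique_within by blast
qed

lemma steady_curve_output_derivative_nonzero:
  fixes f :: "real^'n \<Rightarrow> real^'n" and Df :: "real^'n \<Rightarrow> real^'n^'n"
  assumes f_deriv: "\<forall>x\<in>X. (f has_derivative (\<lambda>h. Df x *v h)) (at x)"
    and const_sign: "\<forall>i k. (\<forall>x\<in>X. Df x $ i $ k > 0) \<or> (\<forall>x\<in>X. Df x $ i $ k < 0)
                          \<or> (\<forall>x\<in>X. Df x $ i $ k = 0)"
    and diag_neg: "\<forall>i. \<forall>x\<in>X. Df x $ i $ i < 0"
    and ctrl: "admissible_control c one f X J"
    and no_loop: "\<not> (\<exists>vs. positive_feedback_loop Df X vs \<and> one \<notin> set vs)"
    and curve: "steady_curve f c one X J I xs xs'" and "u \<in> I"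
  shows "xs' u $ one \<noteq> 0"
proof
  assume v1: "xs' u $ one = 0"
  have x: "xs u \<in> X" and steady: "sysF f c one (xs u) u = 0" and "u \<in> J"
    using curve \<open>u \<in> I\<close> by (auto simp: steady_curve_def)
  have lin: "Df (xs u) *v xs' u + axis one (dgfun_du c (xs u $ one)) = 0"
    using steady_curve_linearization[OF curve \<open>u \<in> I\<close>] f_deriv x v1 by simp
  have "xs' u = 0"
  proof (rule eq_0_if_mult_vanishes_off_node)
    show "Df (xs u) $ i $ i < 0" for i
      using diag_neg x by blast
    show "cycle_weight (\<lambda>i k. Df (xs u) $ k $ i) vs < 0"
      if "distinct vs" "length vs \<ge> 2" "one \<notin> set vs" "cycle_weight (\<lambda>i k. Df (xs u) $ k $ i) vs \<noteq> 0"
      for vs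
      using cycle_weight_neg_if_not_positive_feedback_loop[OF const_sign x] no_loop that by blast
    show "(Df (xs u) *v xs' u) $ i = 0" if "i \<noteq> one" for i
      using arg_cong[OF lin, of "\<lambda>v. v $ i"] that by (simp add: axis_def)
  qed (rule v1)
  then have "dgfun_du c (xs u $ one) = 0"
    using lin by simp
  then show False
    using dgfun_du_nonzero_at_steady_state[OF ctrl x \<open>u \<in> J\<close> steady] by simp
qed

lemma continuous_nonvanishing_same_sign:
  fixes h :: "real \<Rightarrow> real"
  assumes "is_interval I" "continuous_on I h" "\<And>u. u \<in> I \<Longrightarrow> h u \<noteq> 0" "u1 \<in> I" "u2 \<in> I"
  shows "h u1 * h u2 > 0"
proof (rule ccontr)
  assume "\<not> h u1 * h u2 > 0"
  then have "h u1 \<le> 0 \<and> 0 \<le> h u2 \<or> h u2 \<le> 0 \<and> 0 \<le> h u1"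
    by (auto simp: zero_less_mult_iff)
  moreover have "connected (h ` I)"
    using assms(1,2) by (simp add: connected_continuous_image is_interval_connected)
  ultimately have "0 \<in> h ` I"
    using assms(4,5) unfolding connected_iff_interval by blast
  then show False
    using assms(3) by auto
qed

theorem theorem10:
  fixes f :: "real^'n \<Rightarrow> real^'n"
    and Df :: "real^'n \<Rightarrow> real^'n^'n"
    and X :: "(real^'n) set" and J :: "real set"
    and c :: control and one :: 'n
  assumes J_interval: "is_interval J"
    and f_deriv: "\<forall>x\<in>X. (f has_derivative (\<lambda>h. Df x *v h)) (at x)"
    and Df_cont: "continuous_on X Df"
    and const_sign: "\<forall>i k. (\<forall>x\<in>X. Df x $ i $ k > 0) \<or> (\<forall>x\<in>X. Df x $ i $ k < 0)
                          \<or> (\<forall>x\<in>X. Df x $ i $ k = 0)"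
    and diag_neg: "\<forall>i. \<forall>x\<in>X. Df x $ i $ i < 0"
    and ctrl: "admissible_control c one f X J"
    and a0: "A0 f c one X J"
    and no_loop: "\<not> (\<exists>vs. positive_feedback_loop Df X vs \<and> one \<notin> set vs)"
  shows "\<not> quasi_adaptive f c one X J one \<and> \<not> biphasic f c one X J one"
proof -
  \<comment> \<open>J_interval, Df_cont and a0 only guarantee that steady-state curves exist; a statement
    about all of them needs none of the three.\<close>
  have nonzero: "xs' u $ one \<noteq> 0" if "steady_curve f c one X J I xs xs'" "u \<in> I" for I xs xs' u
    using steady_curve_output_derivative_nonzero[OF f_deriv const_sign diag_neg ctrl no_loop that] .
  have same_sign: "xs' u1 $ one * xs' u2 $ one > 0"
    if curve: "steady_curve f c one X J I xs xs'" and "u1 \<in> I" "u2 \<in> I" for I xs xs' u1 u2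
  proof (rule continuous_nonvanishing_same_sign[where h = "\<lambda>u. xs' u $ one"])
    show "is_interval I" "continuous_on I (\<lambda>u. xs' u $ one)"
      using curve by (auto simp: steady_curve_def intro: continuous_on_component)
  qed (use nonzero[OF curve] that in auto)
  show ?thesis
    unfolding quasi_adaptive_def biphasic_def using nonzero same_sign by (meson not_less_iff_gr_or_eq)
qed

end
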